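(* Fix an integer $k\ge1$, $q\in(0,1)$ and $\epsilon_\delta>0$, and set $$\delta(k)=\frac{3}{4q}\,\lambda_{\max}^2(AC_kA^T)\frac{\|\bar{\mathbf r}_k\|_2^4}{\big(\mu+\lambda_{\min}(AC_kA^T)\big)^4}+\epsilon_\delta\,k .$$ Define $\zeta_\delta:[1,\infty)\to\mathbb{R}$ by $$\zeta_\delta(\alpha)=1+\frac{\big(\bar{\mathbf r}_k^TM(\alpha)^{-1}\bar{\mathbf r}_k\big)\big(\bar{\mathbf r}_k^TM(\alpha)^{-1}AC_kA^TM(\alpha)^{-1}\bar{\mathbf r}_k\big)}{4\delta(k)},\qquad M(\alpha)=\mu I_m+\alpha AC_kA^T.$$ Then $\zeta_\delta$ maps $[1,\infty)$ into $[1,\infty)$ and satisfies $|\zeta_\delta'(\alpha)|\le q$ for all $\alpha\in[1,\infty)$; consequently the equation $\alpha=\zeta_\delta(\alpha)$ has a unique solution in $[1,\infty)$, and for every $\alpha^0\in[1,\infty)$ the iteration $\alpha^{p+1}=\zeta_\delta(\alpha^p)$ converges to it.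
   Context: Fixed data: $A\in\mathbb{R}^{m\times n}$, $\mathbf d\in\mathbb{R}^m$, $\mu>0$. For an ensemble $\mathbf u_k=(\mathbf u_k^{(1)},\dots,\mathbf u_k^{(N)})$ of vectors in $\mathbb{R}^n$: $\bar{\mathbf u}_k=\frac1N\sum_i\mathbf u_k^{(i)}$, $C_k=\frac1N\sum_i(\mathbf u_k^{(i)}-\bar{\mathbf u}_k)(\mathbf u_k^{(i)}-\bar{\mathbf u}_k)^T$, $\bar{\mathbf r}_k=\mathbf d-A\bar{\mathbf u}_k$. $\lambda_{\max},\lambda_{\min}$ denote the largest and smallest eigenvalues of a symmetric matrix; $\|\cdot\|_2$ is the Euclidean norm. *)

theory Defs
  imports "HOL-Analysis.Analysis"
begin

text \<open>Eigenvalues of a square real matrix, and the largest/smallest one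
  (used for symmetric matrices, where the set is finite and nonempty).\<close>
definition eigvals :: "real^'m^'m \<Rightarrow> real set" where
  "eigvals S = {l. \<exists>v. v \<noteq> 0 \<and> S *v v = l *\<^sub>R v}"

definition lambda_max :: "real^'m^'m \<Rightarrow> real" where
  "lambda_max S = Max (eigvals S)"

definition lambda_min :: "real^'m^'m \<Rightarrow> real" where
  "lambda_min S = Min (eigvals S)"

definition outer :: "real^'n \<Rightarrow> real^'n \<Rightarrow> real^'n^'n" where
  "outer v w = (\<chi> i j. v $ i * w $ j)"

definition ens_mean :: "nat \<Rightarrow> (nat \<Rightarrow> real^'n) \<Rightarrow> real^'n" where
  "ens_mean N u = (1 / real N) *\<^sub>R (\<Sum>i\<in>{1..N}. u i)"

definition ens_cov :: "nat \<Rightarrow> (nat \<Rightarrow> real^'n) \<Rightarrow> real^'n^'n" where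
  "ens_cov N u = (1 / real N) *\<^sub>R
     (\<Sum>i\<in>{1..N}. outer (u i - ens_mean N u) (u i - ens_mean N u))"

end

theory Submission
  imports Defs
begin

(* Write S = A C A^T (symmetric positive semidefinite) and w = M(alpha)^-1 rbar.  The resolvent
  identity gives dw/dalpha = - M^-1 S w, so f = rbar . w and g = w . S w satisfy f' = - g and
  g' = - 2 (S w) . M^-1 (S w).  Since M(alpha)^-1 has norm at most 1 / (mu + alpha lambda_min)
  and S has norm at most lambda_max, the derivative (f g)' = - g^2 - 2 f (S w) . M^-1 (S w) is
  bounded by 3 lambda_max^2 |rbar|^4 / (mu + lambda_min)^4 on [1, oo), which is what delta(k)
  is designed to dominate: |zeta'| <= q.  Hence zeta is a q-contraction of [1, oo), and the
  Banach fixed point theorem gives the unique fixed point and the convergence of the iteration. *)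

section \<open>Symmetric positive semidefinite matrices\<close>

lemma nonneg_quadratic_discriminant:
  fixes a b c :: real
  assumes nonneg: "\<And>t. 0 \<le> a + 2 * t * b + t\<^sup>2 * c" and "0 \<le> c"
  shows "b\<^sup>2 \<le> a * c"
proof (cases "c = 0")
  case False
  have "0 \<le> a + 2 * (- b / c) * b + (- b / c)\<^sup>2 * c" by (rule nonneg)
  also have "\<dots> = a - b\<^sup>2 / c" using False by (simp add: field_simps power2_eq_square)
  finally show ?thesis using False \<open>0 \<le> c\<close> by (simp add: field_simps)
next
  case True
  have "b = 0"
  proof (rule ccontr)
    assume "b \<noteq> 0"
    have "0 \<le> a + 2 * (- (a + 1) / (2 * b)) * b" using nonneg[of "- (a + 1) / (2 * b)"] True by simp
    also have "\<dots> = -1" using \<open>b \<noteq> 0\<close> by (simp add: field_simps)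
    finally show False by simp
  qed
  then show ?thesis using True by simp
qed

lemma symmetric_matrix_inner:
  fixes S :: "real^'n^'n"
  assumes "transpose S = S"
  shows "x \<bullet> (S *v y) = (S *v x) \<bullet> y"
  by (metis assms dot_lmul_matrix vector_transpose_matrix)

lemma psd_form_Cauchy_Schwarz:
  fixes S :: "real^'n^'n"
  assumes sym: "transpose S = S" and psd: "\<And>x. 0 \<le> x \<bullet> (S *v x)"
  shows "(x \<bullet> (S *v y))\<^sup>2 \<le> (x \<bullet> (S *v x)) * (y \<bullet> (S *v y))"
proof (rule nonneg_quadratic_discriminant[OF _ psd])
  fix t
  have "y \<bullet> (S *v x) = x \<bullet> (S *v y)"
    using symmetric_matrix_inner[OF sym] by (simp add: inner_commute)
  then have "(x + t *\<^sub>R y) \<bullet> (S *v (x + t *\<^sub>R y))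
      = x \<bullet> (S *v x) + 2 * t * (x \<bullet> (S *v y)) + t\<^sup>2 * (y \<bullet> (S *v y))"
    by (simp add: matrix_vector_right_distrib matrix_vector_mult_scaleR inner_add_left
        inner_add_right algebra_simps power2_eq_square)
  then show "0 \<le> x \<bullet> (S *v x) + 2 * t * (x \<bullet> (S *v y)) + t\<^sup>2 * (y \<bullet> (S *v y))"
    by (metis psd)
qed

lemma psd_form_eq_zero_imp_kernel:
  fixes S :: "real^'n^'n"
  assumes sym: "transpose S = S" and psd: "\<And>x. 0 \<le> x \<bullet> (S *v x)"
    and "x \<bullet> (S *v x) = 0"
  shows "S *v x = 0"
proof -
  have "(x \<bullet> (S *v (S *v x)))\<^sup>2 \<le> 0"
    using psd_form_Cauchy_Schwarz[OF sym psd, of x "S *v x"] assms(3) by simp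
  then have "(S *v x) \<bullet> (S *v x) = 0"
    using symmetric_matrix_inner[OF sym] by simp
  then show ?thesis by simp
qed

lemma eigvalsE:
  assumes "l \<in> eigvals S"
  obtains v where "v \<noteq> 0" "S *v v = l *\<^sub>R v"
  using assms unfolding eigvals_def by blast

lemma eigval_le_rayleigh_bound:
  fixes S :: "real^'n^'n"
  assumes "l \<in> eigvals S" and "\<And>x. x \<bullet> (S *v x) \<le> R * (x \<bullet> x)"
  shows "l \<le> R"
proof -
  obtain v where "v \<noteq> 0" "S *v v = l *\<^sub>R v" using assms(1) by (rule eigvalsE)
  then have "l * (v \<bullet> v) \<le> R * (v \<bullet> v)" "0 < v \<bullet> v" using assms(2)[of v] by auto
  then show ?thesis by simp
qed

lemma eigval_ge_rayleigh_bound: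
  fixes S :: "real^'n^'n"
  assumes "l \<in> eigvals S" and "\<And>x. R * (x \<bullet> x) \<le> x \<bullet> (S *v x)"
  shows "R \<le> l"
proof -
  obtain v where "v \<noteq> 0" "S *v v = l *\<^sub>R v" using assms(1) by (rule eigvalsE)
  then have "R * (v \<bullet> v) \<le> l * (v \<bullet> v)" "0 < v \<bullet> v" using assms(2)[of v] by auto
  then show ?thesis by simp
qed

lemma psd_eigval_nonneg:
  fixes S :: "real^'n^'n"
  assumes "\<And>x. 0 \<le> x \<bullet> (S *v x)" and "l \<in> eigvals S"
  shows "0 \<le> l"
  using eigval_ge_rayleigh_bound[OF assms(2), of 0] assms(1) by simp

lemma finite_eigvals_symmetric:
  fixes S :: "real^'n^'n"
  assumes sym: "transpose S = S"
  shows "finite (eigvals S)"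
proof -
  define ev where "ev l = (SOME v. v \<noteq> 0 \<and> S *v v = l *\<^sub>R v)" for l
  have ev: "ev l \<noteq> 0" "S *v ev l = l *\<^sub>R ev l" if "l \<in> eigvals S" for l
    using someI_ex[of "\<lambda>v. v \<noteq> 0 \<and> S *v v = l *\<^sub>R v"] that
    unfolding ev_def eigvals_def by auto
  have "inj_on ev (eigvals S)"
  proof (rule inj_onI)
    fix l l' assume "l \<in> eigvals S" "l' \<in> eigvals S" "ev l = ev l'"
    then have "l *\<^sub>R ev l = l' *\<^sub>R ev l" "ev l \<noteq> 0" using ev by metis+
    then show "l = l'" by simp
  qed
  have "pairwise orthogonal (ev ` eigvals S)"
  proof (rule pairwiseI, clarify)
    fix l l' assume l: "l \<in> eigvals S" "l' \<in> eigvals S" "ev l \<noteq> ev l'"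
    then have "l \<noteq> l'" by blast
    have "l * (ev l \<bullet> ev l') = (S *v ev l) \<bullet> ev l'" using ev l by simp
    also have "\<dots> = ev l \<bullet> (S *v ev l')" by (simp add: symmetric_matrix_inner[OF sym])
    also have "\<dots> = l' * (ev l \<bullet> ev l')" using ev l by simp
    finally show "orthogonal (ev l) (ev l')"
      using \<open>l \<noteq> l'\<close> by (simp add: orthogonal_def)
  qed
  moreover have "0 \<notin> ev ` eigvals S" using ev by auto
  ultimately have "finite (ev ` eigvals S)"
    using pairwise_orthogonal_independent eucl.finiteI_independent by blast
  then show ?thesis using finite_imageD \<open>inj_on ev (eigvals S)\<close> by blast
qed

text \<open>The maximiser \<open>v\<close> of the quadratic form on the unit sphere is an eigenvector, because
  \<open>R I - S\<close> is positive semidefinite and its form vanishes at \<open>v\<close>.\<close>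
lemma symmetric_rayleigh_max_eigval:
  fixes S :: "real^'n^'n"
  assumes sym: "transpose S = S"
  shows "\<exists>R\<in>eigvals S. \<forall>x. x \<bullet> (S *v x) \<le> R * (x \<bullet> x)"
proof -
  have cont: "continuous_on (sphere 0 1) (\<lambda>x::real^'n. x \<bullet> (S *v x))"
    by (intro continuous_intros linear_continuous_on matrix_vector_mul_bounded_linear)
  have "sphere (0::real^'n) 1 \<noteq> {}" by simp
  then obtain v :: "real^'n" where "v \<in> sphere 0 1"
    and vmax: "\<forall>y\<in>sphere 0 1. y \<bullet> (S *v y) \<le> v \<bullet> (S *v v)"
    using continuous_attains_sup[OF compact_sphere _ cont] by blast
  then have v: "norm v = 1" by simp
  define R where "R = v \<bullet> (S *v v)"
  have bound: "x \<bullet> (S *v x) \<le> R * (x \<bullet> x)" for x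
  proof (cases "x = 0")
    case False
    have "x /\<^sub>R norm x \<in> sphere 0 1" using False by simp
    then have "(x /\<^sub>R norm x) \<bullet> (S *v (x /\<^sub>R norm x)) \<le> R"
      using vmax R_def by blast
    then show ?thesis using False
      by (simp add: matrix_vector_mult_scaleR dot_square_norm power2_eq_square field_simps)
  qed simp
  define B where "B = R *\<^sub>R mat 1 - S"
  have B: "B *v x = R *\<^sub>R x - S *v x" for x
    by (simp add: B_def matrix_vector_mult_diff_rdistrib scaleR_matrix_vector_assoc[symmetric])
  have "transpose B = B"
    using sym by (simp add: B_def vec_eq_iff transpose_def mat_def)
  moreover have "0 \<le> x \<bullet> (B *v x)" for x
    using bound[of x] by (simp add: B inner_diff_right)
  moreover have "v \<bullet> (B *v v) = 0"
    using v by (simp add: B inner_diff_right R_def dot_square_norm)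
  ultimately have "B *v v = 0" by (rule psd_form_eq_zero_imp_kernel)
  then have "R \<in> eigvals S"
    using v unfolding eigvals_def B by (intro CollectI exI[of _ v]) auto
  then show ?thesis using bound by blast
qed

lemma lambda_max_symmetric:
  fixes S :: "real^'n^'n"
  assumes sym: "transpose S = S"
  shows "lambda_max S \<in> eigvals S" and "x \<bullet> (S *v x) \<le> lambda_max S * (x \<bullet> x)"
proof -
  obtain R where R: "R \<in> eigvals S" "\<And>x. x \<bullet> (S *v x) \<le> R * (x \<bullet> x)"
    using symmetric_rayleigh_max_eigval[OF sym] by blast
  have "lambda_max S = R"
    unfolding lambda_max_def using R finite_eigvals_symmetric[OF sym]
    by (intro Max_eqI) (auto intro: eigval_le_rayleigh_bound)
  then show "lambda_max S \<in> eigvals S" "x \<bullet> (S *v x) \<le> lambda_max S * (x \<bullet> x)"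
    using R by auto
qed

lemma lambda_min_symmetric:
  fixes S :: "real^'n^'n"
  assumes sym: "transpose S = S"
  shows "lambda_min S \<in> eigvals S" and "lambda_min S * (x \<bullet> x) \<le> x \<bullet> (S *v x)"
proof -
  have neg: "(- S) *v x = - (S *v x)" for x
    by (simp add: matrix_vector_mult_def vec_eq_iff sum_negf)
  have "transpose (- S) = - S" using sym by (simp add: vec_eq_iff transpose_def)
  then obtain R where R: "R \<in> eigvals (- S)" "\<And>x. x \<bullet> ((- S) *v x) \<le> R * (x \<bullet> x)"
    using symmetric_rayleigh_max_eigval by blast
  have "- R \<in> eigvals S"
  proof -
    obtain v where "v \<noteq> 0" "(- S) *v v = R *\<^sub>R v" using R(1) by (rule eigvalsE)
    then have "v \<noteq> 0 \<and> S *v v = (- R) *\<^sub>R v" by (metis neg minus_minus scaleR_minus_left)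
    then show ?thesis unfolding eigvals_def by blast
  qed
  moreover have bound: "- R * (x \<bullet> x) \<le> x \<bullet> (S *v x)" for x
    using R(2)[of x] by (simp add: neg)
  ultimately have "lambda_min S = - R"
    unfolding lambda_min_def using finite_eigvals_symmetric[OF sym]
    by (intro Min_eqI) (auto intro: eigval_ge_rayleigh_bound)
  then show "lambda_min S \<in> eigvals S" "lambda_min S * (x \<bullet> x) \<le> x \<bullet> (S *v x)"
    using \<open>- R \<in> eigvals S\<close> bound by auto
qed

lemma norm_matrix_vector_le_lambda_max:
  fixes S :: "real^'n^'n"
  assumes sym: "transpose S = S" and psd: "\<And>x. 0 \<le> x \<bullet> (S *v x)"
  shows "norm (S *v x) \<le> lambda_max S * norm x"
proof -
  let ?L = "lambda_max S" and ?y = "S *v x"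
  have L: "0 \<le> ?L" using psd_eigval_nonneg[OF psd lambda_max_symmetric(1)[OF sym]] .
  have "(?y \<bullet> ?y)\<^sup>2 = (x \<bullet> (S *v ?y))\<^sup>2"
    using symmetric_matrix_inner[OF sym] by simp
  also have "\<dots> \<le> (x \<bullet> (S *v x)) * (?y \<bullet> (S *v ?y))"
    by (rule psd_form_Cauchy_Schwarz[OF sym psd])
  also have "\<dots> \<le> (?L * (x \<bullet> x)) * (?L * (?y \<bullet> ?y))"
    using L by (intro mult_mono lambda_max_symmetric(2)[OF sym] psd) auto
  finally have sq: "(norm ?y)\<^sup>2 * (norm ?y)\<^sup>2 \<le> (?L * norm x)\<^sup>2 * (norm ?y)\<^sup>2"
    by (simp add: dot_square_norm power2_eq_square mult_ac)
  have "(norm ?y)\<^sup>2 \<le> (?L * norm x)\<^sup>2"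
  proof (cases "?y = 0")
    case False
    then show ?thesis using mult_right_le_imp_le[OF sq] by simp
  qed simp
  then show ?thesis using L by (simp add: power2_le_iff_abs_le)
qed

lemma transpose_congruence:
  fixes A :: "real^'n^'m"
  assumes "transpose C = C"
  shows "transpose (A ** C ** transpose A) = A ** C ** transpose A"
  using assms by (simp add: matrix_transpose_mul matrix_mul_assoc)

lemma congruence_psd:
  fixes A :: "real^'n^'m"
  assumes "\<And>y. 0 \<le> y \<bullet> (C *v y)"
  shows "0 \<le> x \<bullet> ((A ** C ** transpose A) *v x)"
  using assms[of "transpose A *v x"]
  by (simp add: matrix_vector_mul_assoc[symmetric] dot_lmul_matrix[symmetric])

section \<open>The resolvent of a shifted positive semidefinite matrix\<close>

lemma matrix_inv_invertible:
  fixes A :: "'a::semiring_1^'n^'n"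
  assumes "invertible A"
  shows "A ** matrix_inv A = mat 1" and "matrix_inv A ** A = mat 1"
proof -
  have "A ** matrix_inv A = mat 1 \<and> matrix_inv A ** A = mat 1"
    using assms unfolding invertible_def matrix_inv_def by (rule someI_ex)
  then show "A ** matrix_inv A = mat 1" and "matrix_inv A ** A = mat 1" by auto
qed

locale psd_resolvent =
  fixes S :: "real^'m^'m" and \<mu> :: real
  assumes symmetric: "transpose S = S"
    and psd: "\<And>x. 0 \<le> x \<bullet> (S *v x)"
    and mu_pos: "0 < \<mu>"
begin

lemma lambda_min_nonneg: "0 \<le> lambda_min S"
  using psd_eigval_nonneg[OF psd lambda_min_symmetric(1)[OF symmetric]] .

lemma lambda_max_nonneg: "0 \<le> lambda_max S"
  using psd_eigval_nonneg[OF psd lambda_max_symmetric(1)[OF symmetric]] .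

definition shifted :: "real \<Rightarrow> real^'m^'m" where
  "shifted \<gamma> = \<mu> *\<^sub>R mat 1 + \<gamma> *\<^sub>R S"

definition resolvent :: "real \<Rightarrow> real^'m^'m" where
  "resolvent \<gamma> = matrix_inv (shifted \<gamma>)"

lemma shifted_mult: "shifted \<gamma> *v x = \<mu> *\<^sub>R x + \<gamma> *\<^sub>R (S *v x)"
  by (simp add: shifted_def matrix_vector_mult_add_rdistrib scaleR_matrix_vector_assoc[symmetric])

lemma shifted_lower_bound_pos: "0 \<le> \<gamma> \<Longrightarrow> 0 < \<mu> + \<gamma> * lambda_min S"
  using mu_pos lambda_min_nonneg by (simp add: add_pos_nonneg)

lemma shifted_form_lower_bound:
  assumes "0 \<le> \<gamma>"
  shows "(\<mu> + \<gamma> * lambda_min S) * (x \<bullet> x) \<le> x \<bullet> (shifted \<gamma> *v x)"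
  using mult_left_mono[OF lambda_min_symmetric(2)[OF symmetric] assms, of x]
  by (simp add: shifted_mult inner_add_right algebra_simps)

lemma invertible_shifted:
  assumes "0 \<le> \<gamma>"
  shows "invertible (shifted \<gamma>)"
  unfolding invertible_left_inverse matrix_left_invertible_ker
proof (intro allI impI)
  fix x assume "shifted \<gamma> *v x = 0"
  then have "(\<mu> + \<gamma> * lambda_min S) * (x \<bullet> x) \<le> 0"
    using shifted_form_lower_bound[OF assms, of x] by simp
  then have "x \<bullet> x \<le> 0"
    using shifted_lower_bound_pos[OF assms] by (simp add: mult_le_0_iff)
  then show "x = 0" by (metis inner_eq_zero_iff inner_ge_zero order_antisym)
qed

lemma shifted_resolvent: "0 \<le> \<gamma> \<Longrightarrow> shifted \<gamma> *v (resolvent \<gamma> *v y) = y"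
  by (simp add: resolvent_def matrix_vector_mul_assoc matrix_inv_invertible(1) invertible_shifted)

lemma resolvent_shifted: "0 \<le> \<gamma> \<Longrightarrow> resolvent \<gamma> *v (shifted \<gamma> *v y) = y"
  by (simp add: resolvent_def matrix_vector_mul_assoc matrix_inv_invertible(2) invertible_shifted)

lemma resolvent_inner_commute:
  assumes "0 \<le> \<gamma>"
  shows "x \<bullet> (resolvent \<gamma> *v y) = (resolvent \<gamma> *v x) \<bullet> y"
proof -
  have shifted_inner: "a \<bullet> (shifted \<gamma> *v b) = (shifted \<gamma> *v a) \<bullet> b" for a b
    by (simp add: shifted_mult inner_add_left inner_add_right symmetric_matrix_inner[OF symmetric])
  show ?thesis
    using shifted_inner[of "resolvent \<gamma> *v x" "resolvent \<gamma> *v y"]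
    by (simp add: shifted_resolvent[OF assms])
qed

lemma resolvent_form_lower_bound:
  assumes "0 \<le> \<gamma>"
  shows "(\<mu> + \<gamma> * lambda_min S) * (norm (resolvent \<gamma> *v y))\<^sup>2 \<le> y \<bullet> (resolvent \<gamma> *v y)"
  using shifted_form_lower_bound[OF assms, of "resolvent \<gamma> *v y"]
  by (simp add: shifted_resolvent[OF assms] inner_commute dot_square_norm)

lemma resolvent_form_nonneg: "0 \<le> \<gamma> \<Longrightarrow> 0 \<le> y \<bullet> (resolvent \<gamma> *v y)"
  by (meson order_trans resolvent_form_lower_bound shifted_lower_bound_pos
      zero_le_power2 mult_nonneg_nonneg less_imp_le)

lemma norm_resolvent_le:
  assumes "0 \<le> \<gamma>"
  shows "norm (resolvent \<gamma> *v y) \<le> norm y / (\<mu> + \<gamma> * lambda_min S)"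
proof -
  let ?c = "\<mu> + \<gamma> * lambda_min S" and ?x = "resolvent \<gamma> *v y"
  have "?c * norm ?x * norm ?x \<le> norm y * norm ?x"
    using resolvent_form_lower_bound[OF assms, of y] norm_cauchy_schwarz[of y ?x]
    by (simp add: power2_eq_square mult.assoc)
  then have "?c * norm ?x \<le> norm y"
    by (cases "?x = 0") (auto simp: mult_le_cancel_right)
  then show ?thesis
    using shifted_lower_bound_pos[OF assms] by (simp add: field_simps)
qed

lemma resolvent_form_le:
  assumes "0 \<le> \<gamma>"
  shows "y \<bullet> (resolvent \<gamma> *v y) \<le> (norm y)\<^sup>2 / (\<mu> + \<gamma> * lambda_min S)"
proof -
  have "y \<bullet> (resolvent \<gamma> *v y) \<le> norm y * norm (resolvent \<gamma> *v y)"
    by (rule norm_cauchy_schwarz)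
  also have "\<dots> \<le> norm y * (norm y / (\<mu> + \<gamma> * lambda_min S))"
    by (intro mult_left_mono norm_resolvent_le[OF assms] norm_ge_zero)
  finally show ?thesis by (simp add: power2_eq_square)
qed

lemma norm_resolvent_le_mu:
  assumes "0 \<le> \<gamma>"
  shows "norm (resolvent \<gamma> *v y) \<le> norm y / \<mu>"
proof -
  have "norm y / (\<mu> + \<gamma> * lambda_min S) \<le> norm y / \<mu>"
    using assms mu_pos lambda_min_nonneg shifted_lower_bound_pos[OF assms]
    by (intro divide_left_mono) auto
  then show ?thesis using norm_resolvent_le[OF assms, of y] by linarith
qed

lemma resolvent_identity:
  assumes "0 \<le> \<alpha>" and "0 \<le> \<beta>"
  shows "resolvent \<alpha> *v y - resolvent \<beta> *v y = (\<beta> - \<alpha>) *\<^sub>R (resolvent \<beta> *v (S *v (resolvent \<alpha> *v y)))"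
proof -
  let ?x = "resolvent \<alpha> *v y"
  have "shifted \<beta> *v ?x = y + (\<beta> - \<alpha>) *\<^sub>R (S *v ?x)"
    using shifted_resolvent[OF assms(1), of y] by (simp add: shifted_mult algebra_simps)
  then have "?x = resolvent \<beta> *v y + (\<beta> - \<alpha>) *\<^sub>R (resolvent \<beta> *v (S *v ?x))"
    using resolvent_shifted[OF assms(2), of ?x]
    by (simp add: matrix_vector_right_distrib matrix_vector_mult_scaleR)
  then show ?thesis by (simp add: algebra_simps)
qed

lemma resolvent_second_order_remainder:
  fixes r :: "real^'m"
  assumes \<alpha>: "0 \<le> \<alpha>" and \<alpha>h: "0 \<le> \<alpha> + h"
  defines "z \<equiv> S *v (resolvent \<alpha> *v r)"
  shows "norm (resolvent (\<alpha> + h) *v r - resolvent \<alpha> *v r + h *\<^sub>R (resolvent \<alpha> *v z))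
    \<le> h\<^sup>2 * (norm (S *v (resolvent \<alpha> *v z)) / \<mu>)"
proof -
  have "resolvent (\<alpha> + h) *v r - resolvent \<alpha> *v r + h *\<^sub>R (resolvent \<alpha> *v z)
      = h *\<^sub>R (resolvent \<alpha> *v z - resolvent (\<alpha> + h) *v z)"
    using resolvent_identity[OF \<alpha> \<alpha>h, of r] by (simp add: z_def algebra_simps)
  also have "\<dots> = h *\<^sub>R (h *\<^sub>R (resolvent (\<alpha> + h) *v (S *v (resolvent \<alpha> *v z))))"
    using resolvent_identity[OF \<alpha> \<alpha>h, of z] by simp
  finally have "norm (resolvent (\<alpha> + h) *v r - resolvent \<alpha> *v r + h *\<^sub>R (resolvent \<alpha> *v z))
      = h\<^sup>2 * norm (resolvent (\<alpha> + h) *v (S *v (resolvent \<alpha> *v z)))"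
    by (simp add: power2_eq_square abs_mult_self_eq)
  also have "\<dots> \<le> h\<^sup>2 * (norm (S *v (resolvent \<alpha> *v z)) / \<mu>)"
    by (intro mult_left_mono norm_resolvent_le_mu[OF \<alpha>h]) auto
  finally show ?thesis .
qed

lemma resolvent_has_derivative:
  fixes r :: "real^'m"
  assumes "0 < \<alpha>"
  shows "((\<lambda>\<gamma>. resolvent \<gamma> *v r) has_derivative
      (\<lambda>h. h *\<^sub>R - (resolvent \<alpha> *v (S *v (resolvent \<alpha> *v r))))) (at \<alpha>)"
proof -
  define z where "z = S *v (resolvent \<alpha> *v r)"
  define K where "K = norm (S *v (resolvent \<alpha> *v z)) / \<mu>"
  let ?R = "\<lambda>h. norm (resolvent (\<alpha> + h) *v r - resolvent \<alpha> *v r - h *\<^sub>R - (resolvent \<alpha> *v z))"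
  have "\<forall>\<^sub>F h in at (0::real). \<bar>h\<bar> < \<alpha>"
    unfolding eventually_at by (rule exI[of _ \<alpha>]) (auto simp: assms dist_real_def)
  then have "\<forall>\<^sub>F h in at 0. norm (?R h / norm h) \<le> K * \<bar>h\<bar>"
  proof eventually_elim
    case (elim h)
    then have "?R h \<le> h\<^sup>2 * K"
      using resolvent_second_order_remainder[of \<alpha> h r] assms by (simp add: z_def K_def)
    then show ?case
      by (cases "h = 0") (simp_all add: power2_eq_square abs_mult_self_eq divide_le_eq mult_ac)
  qed
  moreover have "((\<lambda>h. K * \<bar>h\<bar>) \<longlongrightarrow> 0) (at (0::real))"
    by (intro tendsto_eq_intros) auto
  ultimately have "((\<lambda>h. ?R h / norm h) \<longlongrightarrow> 0) (at 0)"
    by (rule Lim_null_comparison)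
  then show ?thesis
    unfolding has_derivative_at z_def using bounded_linear_minus[OF bounded_linear_scaleR_left] by simp
qed

lemma resolvent_form_has_real_derivative:
  fixes r :: "real^'m"
  assumes \<gamma>: "0 < \<gamma>"
  defines "w \<equiv> resolvent \<gamma> *v r"
  shows "((\<lambda>\<gamma>. r \<bullet> (resolvent \<gamma> *v r)) has_real_derivative - (w \<bullet> (S *v w))) (at \<gamma>)"
proof -
  have "((\<lambda>\<gamma>. r \<bullet> (resolvent \<gamma> *v r)) has_derivative
      (\<lambda>h. r \<bullet> (h *\<^sub>R - (resolvent \<gamma> *v (S *v w))))) (at \<gamma>)"
    unfolding w_def by (rule has_derivative_inner_right[OF resolvent_has_derivative[OF \<gamma>]])
  moreover have "(\<lambda>h. r \<bullet> (h *\<^sub>R - (resolvent \<gamma> *v (S *v w)))) = (*) (- (w \<bullet> (S *v w)))"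
    using \<gamma> by (simp add: fun_eq_iff resolvent_inner_commute w_def)
  ultimately show ?thesis
    by (simp add: has_field_derivative_def)
qed

lemma resolvent_S_form_has_real_derivative:
  fixes r :: "real^'m"
  assumes "0 < \<gamma>"
  defines "w \<equiv> resolvent \<gamma> *v r" and "z \<equiv> S *v (resolvent \<gamma> *v r)"
  shows "((\<lambda>\<gamma>. (resolvent \<gamma> *v r) \<bullet> (S *v (resolvent \<gamma> *v r))) has_real_derivative
      - 2 * (z \<bullet> (resolvent \<gamma> *v z))) (at \<gamma>)"
proof -
  let ?w' = "- (resolvent \<gamma> *v z)"
  have dw: "((\<lambda>\<gamma>. resolvent \<gamma> *v r) has_derivative (\<lambda>h. h *\<^sub>R ?w')) (at \<gamma>)"
    unfolding z_def by (rule resolvent_has_derivative[OF assms(1)])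
  have deriv: "((\<lambda>\<gamma>. (resolvent \<gamma> *v r) \<bullet> (S *v (resolvent \<gamma> *v r))) has_derivative
      (\<lambda>h. w \<bullet> (S *v (h *\<^sub>R ?w')) + (h *\<^sub>R ?w') \<bullet> z)) (at \<gamma>)"
    using dw unfolding w_def z_def
    by (intro has_derivative_inner bounded_linear.has_derivative[OF matrix_vector_mul_bounded_linear])
  have "w \<bullet> (S *v ?w') = ?w' \<bullet> z"
    unfolding w_def z_def by (simp add: symmetric_matrix_inner[OF symmetric] inner_commute)
  then have "(\<lambda>h. w \<bullet> (S *v (h *\<^sub>R ?w')) + (h *\<^sub>R ?w') \<bullet> z)
      = (*) (- 2 * (z \<bullet> (resolvent \<gamma> *v z)))"
    by (simp add: fun_eq_iff matrix_vector_mult_scaleR inner_commute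
        matrix_vector_mult_diff_distrib[of S 0, simplified])
  with deriv show ?thesis by (simp add: has_field_derivative_def)
qed

definition resolvent_product :: "real^'m \<Rightarrow> real \<Rightarrow> real" where
  "resolvent_product r \<gamma> =
     (r \<bullet> (resolvent \<gamma> *v r)) * (r \<bullet> ((resolvent \<gamma> ** S ** resolvent \<gamma>) *v r))"

lemma resolvent_product_eq:
  assumes "0 \<le> \<gamma>"
  shows "resolvent_product r \<gamma> =
    (r \<bullet> (resolvent \<gamma> *v r)) * ((resolvent \<gamma> *v r) \<bullet> (S *v (resolvent \<gamma> *v r)))"
  using resolvent_inner_commute[OF assms, of r "S *v (resolvent \<gamma> *v r)"]
  by (simp add: resolvent_product_def matrix_vector_mul_assoc[symmetric])

lemma resolvent_product_nonneg: "0 \<le> \<gamma> \<Longrightarrow> 0 \<le> resolvent_product r \<gamma>"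
  by (simp add: resolvent_product_eq resolvent_form_nonneg psd)

lemma resolvent_product_has_real_derivative:
  fixes r :: "real^'m"
  assumes "0 < \<gamma>"
  defines "w \<equiv> resolvent \<gamma> *v r" and "z \<equiv> S *v (resolvent \<gamma> *v r)"
  shows "(resolvent_product r has_real_derivative
      - (w \<bullet> z)\<^sup>2 - 2 * (r \<bullet> w) * (z \<bullet> (resolvent \<gamma> *v z))) (at \<gamma>)"
proof -
  have "((\<lambda>\<gamma>. (r \<bullet> (resolvent \<gamma> *v r)) * ((resolvent \<gamma> *v r) \<bullet> (S *v (resolvent \<gamma> *v r))))
      has_real_derivative - (w \<bullet> z) * (w \<bullet> z) + - 2 * (z \<bullet> (resolvent \<gamma> *v z)) * (r \<bullet> w)) (at \<gamma>)"
    using DERIV_mult[OF resolvent_form_has_real_derivative resolvent_S_form_has_real_derivative] assms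
    by simp
  then have "(resolvent_product r has_real_derivative
      - (w \<bullet> z) * (w \<bullet> z) + - 2 * (z \<bullet> (resolvent \<gamma> *v z)) * (r \<bullet> w)) (at \<gamma>)"
    by (rule has_field_derivative_transform_within_open[where S = "{0<..}"])
       (use assms in \<open>auto simp: resolvent_product_eq\<close>)
  then show ?thesis by (simp add: power2_eq_square algebra_simps)
qed

lemma resolvent_S_form_le:
  assumes "0 \<le> \<gamma>"
  shows "(resolvent \<gamma> *v r) \<bullet> (S *v (resolvent \<gamma> *v r))
    \<le> lambda_max S * (norm r / (\<mu> + \<gamma> * lambda_min S))\<^sup>2"
proof -
  have "(resolvent \<gamma> *v r) \<bullet> (S *v (resolvent \<gamma> *v r)) \<le> lambda_max S * (norm (resolvent \<gamma> *v r))\<^sup>2"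
    using lambda_max_symmetric(2)[OF symmetric] by (simp add: dot_square_norm)
  also have "\<dots> \<le> lambda_max S * (norm r / (\<mu> + \<gamma> * lambda_min S))\<^sup>2"
    using norm_resolvent_le[OF assms] lambda_max_nonneg by (intro mult_left_mono power_mono) auto
  finally show ?thesis .
qed

lemma norm_S_resolvent_le:
  assumes "0 \<le> \<gamma>"
  shows "norm (S *v (resolvent \<gamma> *v r)) \<le> lambda_max S * (norm r / (\<mu> + \<gamma> * lambda_min S))"
proof -
  have "norm (S *v (resolvent \<gamma> *v r)) \<le> lambda_max S * norm (resolvent \<gamma> *v r)"
    by (rule norm_matrix_vector_le_lambda_max[OF symmetric psd])
  also have "\<dots> \<le> lambda_max S * (norm r / (\<mu> + \<gamma> * lambda_min S))"
    using norm_resolvent_le[OF assms] lambda_max_nonneg by (rule mult_left_mono)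
  finally show ?thesis .
qed

lemma resolvent_product_derivative_bound:
  fixes r :: "real^'m"
  assumes \<gamma>: "0 \<le> \<gamma>"
  defines "w \<equiv> resolvent \<gamma> *v r" and "z \<equiv> S *v (resolvent \<gamma> *v r)"
  shows "\<bar>- (w \<bullet> z)\<^sup>2 - 2 * (r \<bullet> w) * (z \<bullet> (resolvent \<gamma> *v z))\<bar>
    \<le> 3 * (lambda_max S)\<^sup>2 * norm r ^ 4 / (\<mu> + \<gamma> * lambda_min S) ^ 4"
proof -
  define c where "c = \<mu> + \<gamma> * lambda_min S"
  define L where "L = lambda_max S"
  have c: "0 < c" unfolding c_def using shifted_lower_bound_pos[OF \<gamma>] .
  have f: "0 \<le> r \<bullet> w" "r \<bullet> w \<le> (norm r)\<^sup>2 / c"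
    unfolding w_def c_def using resolvent_form_nonneg resolvent_form_le \<gamma> by auto
  have g: "0 \<le> w \<bullet> z" "w \<bullet> z \<le> L * (norm r / c)\<^sup>2"
    unfolding w_def z_def c_def L_def using psd resolvent_S_form_le[OF \<gamma>] by auto
  have "(norm z)\<^sup>2 / c \<le> (L * (norm r / c))\<^sup>2 / c"
    unfolding z_def c_def L_def using norm_S_resolvent_le[OF \<gamma>] c
    by (intro divide_right_mono power_mono) (auto simp: c_def)
  then have t: "0 \<le> z \<bullet> (resolvent \<gamma> *v z)" "z \<bullet> (resolvent \<gamma> *v z) \<le> (L * (norm r / c))\<^sup>2 / c"
    using resolvent_form_nonneg[OF \<gamma>] resolvent_form_le[OF \<gamma>, of z] unfolding c_def by auto
  have "2 * (r \<bullet> w) * (z \<bullet> (resolvent \<gamma> *v z)) \<le> 2 * ((norm r)\<^sup>2 / c) * ((L * (norm r / c))\<^sup>2 / c)"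
    using f t by (intro mult_mono) auto
  moreover have "(w \<bullet> z)\<^sup>2 \<le> (L * (norm r / c)\<^sup>2)\<^sup>2"
    using g by (intro power_mono)
  moreover have "2 * ((norm r)\<^sup>2 / c) * ((L * (norm r / c))\<^sup>2 / c) + (L * (norm r / c)\<^sup>2)\<^sup>2
      = 3 * L\<^sup>2 * norm r ^ 4 / c ^ 4"
    using c by (simp add: field_simps power2_eq_square power4_eq_xxxx)
  moreover have "0 \<le> 2 * (r \<bullet> w) * (z \<bullet> (resolvent \<gamma> *v z))" "0 \<le> (w \<bullet> z)\<^sup>2"
    using f t by simp_all
  ultimately show ?thesis
    unfolding abs_le_iff c_def L_def by (intro conjI) linarith+
qed

lemma resolvent_product_has_bounded_derivative:
  fixes r :: "real^'m"
  assumes "1 \<le> \<gamma>"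
  shows "\<exists>D. (resolvent_product r has_real_derivative D) (at \<gamma>)
    \<and> \<bar>D\<bar> \<le> 3 * (lambda_max S)\<^sup>2 * norm r ^ 4 / (\<mu> + lambda_min S) ^ 4"
proof -
  let ?w = "resolvent \<gamma> *v r"
  let ?z = "S *v (resolvent \<gamma> *v r)"
  let ?D = "- (?w \<bullet> ?z)\<^sup>2 - 2 * (r \<bullet> ?w) * (?z \<bullet> (resolvent \<gamma> *v ?z))"
  have "\<mu> + lambda_min S \<le> \<mu> + \<gamma> * lambda_min S"
    using assms lambda_min_nonneg mult_right_mono[of 1 \<gamma> "lambda_min S"] by simp
  then have "3 * (lambda_max S)\<^sup>2 * norm r ^ 4 / (\<mu> + \<gamma> * lambda_min S) ^ 4
      \<le> 3 * (lambda_max S)\<^sup>2 * norm r ^ 4 / (\<mu> + lambda_min S) ^ 4"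
    using shifted_lower_bound_pos[of 1] by (intro divide_left_mono power_mono mult_pos_pos) auto
  then have "\<bar>?D\<bar> \<le> 3 * (lambda_max S)\<^sup>2 * norm r ^ 4 / (\<mu> + lambda_min S) ^ 4"
    using resolvent_product_derivative_bound[of \<gamma> r] assms by simp
  moreover have "(resolvent_product r has_real_derivative ?D) (at \<gamma>)"
    using assms by (intro resolvent_product_has_real_derivative) simp
  ultimately show ?thesis by blast
qed

lemma rescaled_resolvent_product_derivative_bound:
  fixes r :: "real^'m"
  assumes "0 < c" and "3 * (lambda_max S)\<^sup>2 * norm r ^ 4 / (\<mu> + lambda_min S) ^ 4 \<le> q * c"
  shows "\<forall>\<alpha>\<ge>1. \<exists>D. ((\<lambda>\<alpha>. 1 + resolvent_product r \<alpha> / c) has_real_derivative D) (at \<alpha>)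
    \<and> \<bar>D\<bar> \<le> q"
proof (intro allI impI)
  fix \<alpha> :: real assume "1 \<le> \<alpha>"
  then obtain D where D: "(resolvent_product r has_real_derivative D) (at \<alpha>)" "\<bar>D\<bar> \<le> q * c"
    using resolvent_product_has_bounded_derivative[of \<alpha> r] assms(2) by force
  have "((\<lambda>\<alpha>. 1 + resolvent_product r \<alpha> / c) has_real_derivative 0 + D / c) (at \<alpha>)"
    by (intro DERIV_add DERIV_const DERIV_cdivide D(1))
  moreover have "\<bar>D / c\<bar> \<le> q"
    using D(2) assms(1) by (simp add: abs_divide divide_le_eq)
  ultimately show "\<exists>D. ((\<lambda>\<alpha>. 1 + resolvent_product r \<alpha> / c) has_real_derivative D) (at \<alpha>)
    \<and> \<bar>D\<bar> \<le> q" by auto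
qed

end

section \<open>Contractions of a real half-line\<close>

lemma bounded_real_derivative_imp_lipschitz:
  fixes f :: "real \<Rightarrow> real"
  assumes "convex X"
    and "\<And>x. x \<in> X \<Longrightarrow> (f has_real_derivative f' x) (at x)"
    and "\<And>x. x \<in> X \<Longrightarrow> \<bar>f' x\<bar> \<le> C" and "0 \<le> C"
  shows "C-lipschitz_on X f"
proof (rule bounded_derivative_imp_lipschitz[OF _ assms(1) _ assms(4)])
  fix x assume "x \<in> X"
  show "(f has_derivative (*) (f' x)) (at x within X)"
    using assms(2)[OF \<open>x \<in> X\<close>] by (simp add: has_field_derivative_def has_derivative_at_withinI)
  show "onorm ((*) (f' x)) \<le> C"
    using assms(3)[OF \<open>x \<in> X\<close>] by (intro onorm_le) (simp add: abs_mult mult_right_mono)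
qed

lemma contraction_iterates_tendsto:
  fixes f :: "'a::metric_space \<Rightarrow> 'a"
  assumes lip: "c-lipschitz_on S f" and "c < 1" and maps: "f ` S \<subseteq> S"
    and "x0 \<in> S" and "x \<in> S" and "f x = x"
  shows "(\<lambda>p. (f ^^ p) x0) \<longlonglongrightarrow> x"
proof -
  have c: "0 \<le> c" using lipschitz_on_nonneg[OF lip] .
  have iter: "(f ^^ p) x0 \<in> S \<and> dist ((f ^^ p) x0) x \<le> c ^ p * dist x0 x" for p
  proof (induction p)
    case 0
    show ?case using \<open>x0 \<in> S\<close> by simp
  next
    case (Suc p)
    then have "dist (f ((f ^^ p) x0)) (f x) \<le> c * dist ((f ^^ p) x0) x"
      using lipschitz_onD[OF lip _ \<open>x \<in> S\<close>] by blast
    also have "\<dots> \<le> c * (c ^ p * dist x0 x)"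
      using Suc.IH c by (intro mult_left_mono) auto
    finally have "dist ((f ^^ Suc p) x0) x \<le> c ^ Suc p * dist x0 x"
      using \<open>f x = x\<close> by (simp add: mult.assoc)
    moreover have "(f ^^ Suc p) x0 \<in> S" using Suc.IH maps by auto
    ultimately show ?case by blast
  qed
  have "(\<lambda>p. c ^ p * dist x0 x) \<longlonglongrightarrow> 0"
    using c \<open>c < 1\<close> by (intro tendsto_mult_left_zero LIMSEQ_power_zero) simp
  then have "(\<lambda>p. dist ((f ^^ p) x0) x) \<longlonglongrightarrow> 0"
    by (rule Lim_null_comparison[rotated]) (use iter in simp)
  then show ?thesis by (rule tendsto_dist_iff[THEN iffD2])
qed

lemma real_contraction_fixpoint:
  fixes f :: "real \<Rightarrow> real"
  assumes maps: "f ` {a..} \<subseteq> {a..}" and "q < 1"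
    and deriv: "\<forall>x\<ge>a. \<exists>D. (f has_real_derivative D) (at x) \<and> \<bar>D\<bar> \<le> q"
  shows "(\<exists>!x. x \<ge> a \<and> f x = x)
    \<and> (\<forall>x0 x. x0 \<ge> a \<and> x \<ge> a \<and> f x = x \<longrightarrow> (\<lambda>p. (f ^^ p) x0) \<longlonglongrightarrow> x)"
proof -
  obtain f' where f': "\<And>x. a \<le> x \<Longrightarrow> (f has_real_derivative f' x) (at x) \<and> \<bar>f' x\<bar> \<le> q"
    using deriv by metis
  have "0 \<le> q" using f'[of a] by auto
  then have lip: "q-lipschitz_on {a..} f"
    using f' by (intro bounded_real_derivative_imp_lipschitz) auto
  have "\<exists>!x\<in>{a..}. f x = x"
  proof (rule Banach_fix[OF _ _ \<open>0 \<le> q\<close> \<open>q < 1\<close> maps])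
    show "complete {a..}" by (simp add: complete_eq_closed)
    show "dist (f x) (f y) \<le> q * dist x y" if "x \<in> {a..}" "y \<in> {a..}" for x y
      using lip that by (rule lipschitz_onD)
  qed simp
  moreover have "\<forall>x0 x. x0 \<ge> a \<and> x \<ge> a \<and> f x = x \<longrightarrow> (\<lambda>p. (f ^^ p) x0) \<longlonglongrightarrow> x"
    using contraction_iterates_tendsto[OF lip \<open>q < 1\<close> maps] by auto
  ultimately show ?thesis by simp
qed

section \<open>Ensemble covariance\<close>

lemma outer_mult_vector: "outer v w *v y = (w \<bullet> y) *\<^sub>R v"
  by (simp add: vec_eq_iff outer_def matrix_vector_mult_def inner_vec_def sum_distrib_left
      algebra_simps)

lemma transpose_ens_cov: "transpose (ens_cov N u) = ens_cov N u"
  by (simp add: vec_eq_iff transpose_def ens_cov_def outer_def sum_component mult.commute)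

lemma ens_cov_form:
  fixes x :: "real^'n"
  shows "x \<bullet> (ens_cov N u *v x) = (\<Sum>i\<in>{1..N}. ((u i - ens_mean N u) \<bullet> x)\<^sup>2) / real N"
proof -
  have "(\<Sum>i\<in>I. outer (v i) (v i)) *v x = (\<Sum>i\<in>I. (v i \<bullet> x) *\<^sub>R v i)"
    if "finite I" for I and v :: "nat \<Rightarrow> real^'n"
    using that by (induction I rule: finite_induct)
      (simp_all add: matrix_vector_mult_add_rdistrib outer_mult_vector)
  then show ?thesis
    by (simp add: ens_cov_def scaleR_matrix_vector_assoc[symmetric] inner_sum_right
        power2_eq_square inner_commute)
qed

lemma ens_cov_psd: "0 \<le> x \<bullet> (ens_cov N u *v x)"
  by (simp add: ens_cov_form sum_nonneg)

theorem proposition4: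
  fixes A :: "real^'n^'m" and d :: "real^'m" and \<mu> :: real
    and N :: nat and u :: "nat \<Rightarrow> real^'n"
    and k :: nat and q :: real and \<epsilon>\<delta> :: real
    and C :: "real^'n^'n" and rbar :: "real^'m" and \<delta> :: real
    and M :: "real \<Rightarrow> real^'m^'m" and \<zeta> :: "real \<Rightarrow> real"
  assumes "\<mu> > 0" and "N \<ge> 1" and "k \<ge> 1"
    and "0 < q" and "q < 1" and "\<epsilon>\<delta> > 0"
    and C_def: "C = ens_cov N u"
    and r_def: "rbar = d - A *v ens_mean N u"
    and delta_def: "\<delta> = 3 / (4 * q) * (lambda_max (A ** C ** transpose A))\<^sup>2
        * norm rbar ^ 4 / (\<mu> + lambda_min (A ** C ** transpose A)) ^ 4
        + \<epsilon>\<delta> * real k"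
    and M_def: "\<And>\<alpha>. M \<alpha> = \<mu> *\<^sub>R mat 1 + \<alpha> *\<^sub>R (A ** C ** transpose A)"
    and zeta_def: "\<And>\<alpha>. \<zeta> \<alpha> = 1 +
        (rbar \<bullet> (matrix_inv (M \<alpha>) *v rbar)) *
        (rbar \<bullet> ((matrix_inv (M \<alpha>) ** A ** C ** transpose A ** matrix_inv (M \<alpha>)) *v rbar))
        / (4 * \<delta>)"
  shows "\<zeta> ` {1..} \<subseteq> {1..}
    \<and> (\<forall>\<alpha>\<ge>1. \<exists>D. (\<zeta> has_real_derivative D) (at \<alpha>) \<and> \<bar>D\<bar> \<le> q)
    \<and> (\<exists>!\<alpha>. \<alpha> \<ge> 1 \<and> \<zeta> \<alpha> = \<alpha>)
    \<and> (\<forall>\<alpha>0 \<alpha>. \<alpha>0 \<ge> 1 \<and> \<alpha> \<ge> 1 \<and> \<zeta> \<alpha> = \<alpha> \<longrightarrow>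
           (\<lambda>p. (\<zeta> ^^ p) \<alpha>0) \<longlonglongrightarrow> \<alpha>)"

proof -
  define S where "S = A ** C ** transpose A"
  interpret psd_resolvent S \<mu>
    using \<open>\<mu> > 0\<close> unfolding S_def C_def
    by unfold_locales (simp_all add: transpose_congruence transpose_ens_cov congruence_psd ens_cov_psd)
  have zeta: "\<zeta> = (\<lambda>\<alpha>. 1 + resolvent_product rbar \<alpha> / (4 * \<delta>))"
    unfolding resolvent_product_def resolvent_def shifted_def
    by (simp add: fun_eq_iff zeta_def M_def S_def matrix_mul_assoc)
  define X where "X = (lambda_max S)\<^sup>2 * norm rbar ^ 4 / (\<mu> + lambda_min S) ^ 4"
  have \<delta>: "\<delta> = 3 / (4 * q) * X + \<epsilon>\<delta> * real k"
    unfolding delta_def X_def S_def by simp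
  have \<epsilon>: "0 < \<epsilon>\<delta> * real k" using \<open>\<epsilon>\<delta> > 0\<close> \<open>k \<ge> 1\<close> by simp
  have "0 \<le> X" unfolding X_def by simp
  then have "0 < \<delta>"
    unfolding \<delta> using \<open>q > 0\<close> \<epsilon> by (intro add_nonneg_pos mult_nonneg_nonneg) auto
  have "q * (4 * \<delta>) = 3 * X + 4 * (q * (\<epsilon>\<delta> * real k))"
    unfolding \<delta> using \<open>q > 0\<close> by (simp add: field_simps)
  then have "3 * X \<le> q * (4 * \<delta>)"
    using mult_pos_pos[OF \<open>q > 0\<close> \<epsilon>] by linarith
  then have deriv: "\<forall>\<alpha>\<ge>1. \<exists>D. (\<zeta> has_real_derivative D) (at \<alpha>) \<and> \<bar>D\<bar> \<le> q"
    unfolding zeta X_def using \<open>0 < \<delta>\<close>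
    by (intro rescaled_resolvent_product_derivative_bound) simp_all
  have maps: "\<zeta> ` {1..} \<subseteq> {1..}"
    using resolvent_product_nonneg \<open>0 < \<delta>\<close> by (auto simp: zeta)
  show ?thesis using maps deriv real_contraction_fixpoint[OF maps \<open>q < 1\<close> deriv] by blast
qed

end
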